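(* Algorithm Drift (defined in the context) is $3$-competitive for the line chasing problem in $\mathbb{R}^2$: for every initial point $P_0\in\mathbb{R}^2$ and every finite sequence of lines $X_1,\dots,X_m$ in $\mathbb{R}^2$, the path $P_0,P_1,\dots,P_m$ produced by Drift satisfies $\sum_{t=1}^m |P_{t-1}P_t| \le 3\cdot \mathrm{OPT}$, where $\mathrm{OPT}=\min\{\sum_{t=1}^m |A_{t-1}A_t| : A_0=P_0,\ A_t\in X_t \text{ for } t=1,\dots,m\}$.
   Context: $|XY|$ denotes Euclidean distance. Line chasing problem: given an initial point $P_0\in\mathbb{R}^d$ and lines $X_1,\dots,X_m$ revealed one at a time, an online algorithm must, upon seeing $X_t$ (and not the later lines), choose $P_t\in X_t$; its cost is $\sum_{t=1}^m|P_{t-1}P_t|$. An online algorithm is $c$-competitive if its cost is at most $c$ times the optimal offline cost $\mathrm{OPT}$ on every input. Algorithm Drift (in $\mathbb{R}^2$): Let $L$ be the previous request line and $P\in L$ the algorithm's current point (for the first request, $L$ is an arbitrary fixed line through $P_0$). Let $L'$ be the new request, and for $X\in L$ let $\bar X$ denote the orthogonal projection of $X$ onto $L'$. If $L'$ does not intersect $L$ in a single point (i.e. $L'$ is parallel to or equal to $L$), move to $P'=\bar P$. Otherwise let $S=L\cap L'$, $r=|SP|$, $h=|P\bar P|$, $s=|S\bar P|$, and $x=\frac{1}{\sqrt2}(h+s-r)$; move to the point $P'\in L'$ lying on the ray from $S$ through $\bar P$ (or $P'=S$ if $\bar P=S$) with $|SP'|=s-x$. *)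

theory Defs
  imports "HOL-Analysis.Analysis"
begin

type_synonym point = "real^2"

definition is_line :: "point set \<Rightarrow> bool" where
  "is_line L \<longleftrightarrow> (\<exists>a v. v \<noteq> 0 \<and> L = {a + t *\<^sub>R v | t. True})"

definition proj :: "point set \<Rightarrow> point \<Rightarrow> point" where
  "proj L X = (THE Y. Y \<in> L \<and> (\<forall>Z\<in>L. inner (X - Y) (Z - Y) = 0))"

definition drift_step :: "point set \<Rightarrow> point set \<Rightarrow> point \<Rightarrow> point" where
  "drift_step L L' P =
     (if \<not> (\<exists>S. L \<inter> L' = {S}) then proj L' P
      else (let S = (THE S. L \<inter> L' = {S});
                Pb = proj L' P;
                r = dist S P; h = dist P Pb; s = dist S Pb;
                x = (h + s - r) / sqrt 2
            in if Pb = S then S else S + ((s - x) / s) *\<^sub>R (Pb - S)))"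

text \<open>Position of Drift after serving requests X 1, ..., X t, starting at P0 with
  initial (arbitrary fixed) line L0 through P0.\<close>
fun drift_pos :: "point set \<Rightarrow> point \<Rightarrow> (nat \<Rightarrow> point set) \<Rightarrow> nat \<Rightarrow> point" where
  "drift_pos L0 P0 X 0 = P0"
| "drift_pos L0 P0 X (Suc t) =
     drift_step (if t = 0 then L0 else X t) (X (Suc t)) (drift_pos L0 P0 X t)"

definition path_cost :: "(nat \<Rightarrow> point) \<Rightarrow> nat \<Rightarrow> real" where
  "path_cost A m = (\<Sum>t = 1..m. dist (A (t - 1)) (A t))"

definition OPT :: "point \<Rightarrow> (nat \<Rightarrow> point set) \<Rightarrow> nat \<Rightarrow> real" where
  "OPT P0 X m = Inf {path_cost A m | A. A 0 = P0 \<and> (\<forall>t\<in>{1..m}. A t \<in> X t)}"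

end

theory Submission
  imports Defs
begin

text \<open>
  A potential-function argument with potential sqrt 3 * |P A|, where P is Drift's position and A the
  position of an arbitrary feasible offline path: every step satisfies
  |P P'| + sqrt 3 * |P' A'| <= sqrt 3 * |P A| + 3 * |A A'|, and summing over the steps gives
  cost(Drift) <= 3 * cost(A).

  For the one-step inequality it suffices to exhibit a vector g with |g| <= sqrt 3,
  <g, A - P> <= |P A|, <g, A' - P'> >= |P' A'| and sqrt 3 * <g, P' - P> >= |P P'|, since
  Cauchy-Schwarz bounds <g, A' - A> by sqrt 3 * |A A'|. For parallel lines g combines the common
  direction with the normal along which Drift moves. For crossing lines there are three choices
  of g, depending on the side of P' on which A' lies and, when A' lies beyond P', on the angle
  between the lines.
\<close>

section \<open>The one-step inequality\<close>

lemma amortized_step_by_witness: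
  fixes g P P' A A' :: "'a::real_inner"
  assumes g_norm: "norm g \<le> sqrt 3"
    and old_line: "inner g (A - P) \<le> dist P A"
    and new_line: "dist P' A' \<le> inner g (A' - P')"
    and move: "dist P P' \<le> sqrt 3 * inner g (P' - P)"
  shows "dist P P' + sqrt 3 * dist P' A' \<le> sqrt 3 * dist P A + 3 * dist A A'"
proof -
  have "inner g (A' - A) \<le> norm g * dist A A'"
    using norm_cauchy_schwarz[of g "A' - A"] by (simp add: dist_norm norm_minus_commute)
  also have "\<dots> \<le> sqrt 3 * dist A A'"
    using g_norm by (simp add: mult_right_mono)
  finally have adversary: "inner g (A' - A) \<le> sqrt 3 * dist A A'" .
  have "inner g (A' - P') + inner g (P' - P) = inner g (A - P) + inner g (A' - A)"
    by (simp add: inner_diff_right)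
  then have "sqrt 3 * inner g (A' - P') + sqrt 3 * inner g (P' - P)
      \<le> sqrt 3 * dist P A + sqrt 3 * (sqrt 3 * dist A A')"
    using old_line adversary
    by (metis add_mono distrib_left mult_left_mono real_sqrt_ge_zero zero_le_numeral)
  moreover have "sqrt 3 * dist P' A' \<le> sqrt 3 * inner g (A' - P')"
    using new_line by (simp add: mult_left_mono)
  moreover have "sqrt 3 * (sqrt 3 * dist A A') = 3 * dist A A'"
    by (simp add: mult.assoc [symmetric])
  ultimately show ?thesis
    using move by linarith
qed

lemma inner_le_dist_along_unit:
  fixes g e P A :: "'a::real_inner"
  assumes "A - P = l *\<^sub>R e" "norm e = 1" "\<bar>inner g e\<bar> \<le> 1"
  shows "inner g (A - P) \<le> dist P A"
proof -
  have "inner g (A - P) \<le> \<bar>l\<bar> * \<bar>inner g e\<bar>"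
    using assms(1) by (simp add: abs_mult [symmetric])
  also have "\<dots> \<le> \<bar>l\<bar>"
    using assms(3) by (simp add: mult_left_le)
  also have "\<dots> = dist P A"
    using assms(1,2) by (simp add: dist_norm norm_minus_commute)
  finally show ?thesis .
qed

lemma amortized_step_parallel:
  fixes u P P' A A' :: "'a::real_inner"
  assumes u: "norm u = 1" and old_line: "A - P = l *\<^sub>R u" and new_line: "A' - P' = w *\<^sub>R u"
    and orth: "inner (P' - P) u = 0"
  shows "dist P P' + sqrt 3 * dist P' A' \<le> sqrt 3 * dist P A + 3 * dist A A'"
proof -
  have uu: "inner u u = 1"
    using u by (simp add: dot_square_norm)
  define n where "n = (P' - P) /\<^sub>R norm (P' - P)"
  define \<sigma> :: real where "\<sigma> = (if w \<ge> 0 then 1 else - 1)"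
  define g where "g = \<sigma> *\<^sub>R u + sqrt 2 *\<^sub>R n"
  have nu: "inner n u = 0"
    using orth by (simp add: n_def)
  have "norm n \<le> 1"
    by (cases "P' = P") (simp_all add: n_def)
  then have nn: "inner n n \<le> 1"
    by (simp add: dot_square_norm power_le_one)
  have g_u: "inner g u = \<sigma>"
    by (simp add: g_def inner_add_left uu nu)
  have "inner g g = \<sigma>\<^sup>2 + 2 * inner n n"
    by (simp add: g_def inner_add_left inner_add_right uu nu inner_commute [of u n] power2_eq_square)
  also have "\<dots> \<le> 3"
    using nn by (simp add: \<sigma>_def)
  finally have "norm g \<le> sqrt 3"
    by (simp add: norm_eq_sqrt_inner)
  moreover have "inner g (A - P) \<le> dist P A"
    by (rule inner_le_dist_along_unit [OF old_line u]) (simp add: g_u \<sigma>_def)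
  moreover have "dist P' A' \<le> inner g (A' - P')"
    using u by (simp add: new_line g_u dist_norm norm_minus_commute \<sigma>_def)
  moreover have "dist P P' \<le> sqrt 3 * inner g (P' - P)"
  proof -
    have "inner n (P' - P) = norm (P' - P)"
      by (cases "P' = P") (simp_all add: n_def dot_square_norm power2_eq_square)
    then have "inner g (P' - P) = sqrt 2 * dist P P'"
      using orth by (simp add: g_def inner_add_left inner_commute [of u] dist_norm norm_minus_commute)
    moreover have "1 \<le> sqrt 3 * sqrt 2"
      by (simp add: real_sqrt_mult [symmetric])
    ultimately show ?thesis
      by (simp add: mult.assoc [symmetric] mult_le_cancel_right1)
  qed
  ultimately show ?thesis
    by (rule amortized_step_by_witness)
qed

section \<open>Crossing lines\<close>

text \<open>(\<gamma>, \<delta>) are the coordinates of the witness g in the orthonormal frame (u, n) with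
  e = c u + sqrt (1 - c^2) n, for P = S + r e, P' = S + p u and A' = S + b u.\<close>

definition crossing_witness :: "real \<Rightarrow> real \<Rightarrow> real \<Rightarrow> real \<Rightarrow> real \<Rightarrow> real \<Rightarrow> bool" where
  "crossing_witness c r p b \<gamma> \<delta> \<longleftrightarrow>
     \<bar>\<gamma> * c + \<delta> * sqrt (1 - c\<^sup>2)\<bar> \<le> 1 \<and> \<gamma>\<^sup>2 + \<delta>\<^sup>2 \<le> 3 \<and> \<bar>b - p\<bar> \<le> (b - p) * \<gamma> \<and>
     0 \<le> p * \<gamma> - r * (\<gamma> * c + \<delta> * sqrt (1 - c\<^sup>2)) \<and>
     (r * c - p)\<^sup>2 + r\<^sup>2 * (1 - c\<^sup>2) \<le> 3 * (p * \<gamma> - r * (\<gamma> * c + \<delta> * sqrt (1 - c\<^sup>2)))\<^sup>2"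

lemma unit_normal_in_plane:
  fixes e u :: "'a::real_inner"
  assumes e: "norm e = 1" and u: "norm u = 1" and not_parallel: "\<bar>inner e u\<bar> < 1"
  obtains n where "inner n u = 0" "inner n e = sqrt (1 - (inner e u)\<^sup>2)" "inner n n = 1"
proof -
  define c where "c = inner e u"
  define z where "z = sqrt (1 - c\<^sup>2)"
  have ee: "inner e e = 1" and uu: "inner u u = 1"
    using e u by (simp_all add: dot_square_norm)
  have ue: "inner u e = c"
    by (simp add: c_def inner_commute)
  have "c\<^sup>2 < 1"
    using not_parallel by (simp add: c_def abs_square_less_1)
  then have z: "0 < z" "z\<^sup>2 = 1 - c\<^sup>2"
    by (simp_all add: z_def)
  define n where "n = (e - c *\<^sub>R u) /\<^sub>R z"
  have "inner n u = 0" "inner n e = z" "inner n n = 1"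
    using z by (simp_all add: n_def inner_diff_left inner_diff_right ee uu ue c_def
        power2_eq_square field_simps)
  then show ?thesis
    using that [of n] by (simp add: z_def c_def)
qed

lemma amortized_step_at_crossing:
  fixes e u S :: "'a::real_inner"
  assumes e: "norm e = 1" and u: "norm u = 1" and not_parallel: "\<bar>inner e u\<bar> < 1"
    and witness: "crossing_witness (inner e u) r p b \<gamma> \<delta>"
  shows "dist (S + r *\<^sub>R e) (S + p *\<^sub>R u) + sqrt 3 * dist (S + p *\<^sub>R u) (S + b *\<^sub>R u)
    \<le> sqrt 3 * dist (S + r *\<^sub>R e) (S + a *\<^sub>R e) + 3 * dist (S + a *\<^sub>R e) (S + b *\<^sub>R u)"
proof -
  define c where "c = inner e u"
  define z where "z = sqrt (1 - c\<^sup>2)"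
  obtain n where n_u: "inner n u = 0" and n_e: "inner n e = z" and n_n: "inner n n = 1"
    using unit_normal_in_plane [OF e u not_parallel] unfolding z_def c_def by blast
  define g where "g = \<gamma> *\<^sub>R u + \<delta> *\<^sub>R n"
  define G where "G = p * \<gamma> - r * (\<gamma> * c + \<delta> * z)"
  have ee: "inner e e = 1" and uu: "inner u u = 1"
    using e u by (simp_all add: dot_square_norm)
  have ue: "inner u e = c"
    by (simp add: c_def inner_commute)
  have g_u: "inner g u = \<gamma>" and g_e: "inner g e = \<gamma> * c + \<delta> * z"
    by (simp_all add: g_def inner_add_left uu n_u n_e ue)
  have "inner g g = \<gamma>\<^sup>2 + \<delta>\<^sup>2"
    by (simp add: g_def inner_add_left inner_add_right uu n_u n_n inner_commute [of u n]
        power2_eq_square)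
  from witness have bounds: "\<bar>\<gamma> * c + \<delta> * z\<bar> \<le> 1" "\<gamma>\<^sup>2 + \<delta>\<^sup>2 \<le> 3"
    "\<bar>b - p\<bar> \<le> (b - p) * \<gamma>" "0 \<le> G" "(r * c - p)\<^sup>2 + r\<^sup>2 * (1 - c\<^sup>2) \<le> 3 * G\<^sup>2"
    by (simp_all add: crossing_witness_def c_def z_def G_def)
  have "norm g \<le> sqrt 3"
    using \<open>inner g g = \<gamma>\<^sup>2 + \<delta>\<^sup>2\<close> bounds(2) by (simp add: norm_eq_sqrt_inner)
  moreover have "inner g ((S + a *\<^sub>R e) - (S + r *\<^sub>R e)) \<le> dist (S + r *\<^sub>R e) (S + a *\<^sub>R e)"
    by (rule inner_le_dist_along_unit [where l = "a - r" and e = e])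
      (simp_all add: e g_e bounds(1) scaleR_diff_left)
  moreover have "dist (S + p *\<^sub>R u) (S + b *\<^sub>R u) \<le> inner g ((S + b *\<^sub>R u) - (S + p *\<^sub>R u))"
    using u bounds(3) by (simp add: dist_norm g_u algebra_simps flip: scaleR_diff_left)
  moreover have "dist (S + r *\<^sub>R e) (S + p *\<^sub>R u) \<le> sqrt 3 * inner g ((S + p *\<^sub>R u) - (S + r *\<^sub>R e))"
  proof -
    have "inner (r *\<^sub>R e - p *\<^sub>R u) (r *\<^sub>R e - p *\<^sub>R u) = (r * c - p)\<^sup>2 + r\<^sup>2 * (1 - c\<^sup>2)"
      by (simp add: inner_diff_left inner_diff_right ee uu ue c_def power2_eq_square algebra_simps)
    then have "dist (S + r *\<^sub>R e) (S + p *\<^sub>R u) = sqrt ((r * c - p)\<^sup>2 + r\<^sup>2 * (1 - c\<^sup>2))"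
      by (simp add: dist_norm norm_eq_sqrt_inner)
    also have "\<dots> \<le> sqrt (3 * G\<^sup>2)"
      using bounds(5) by (rule real_sqrt_le_mono)
    also have "\<dots> = sqrt 3 * G"
      using bounds(4) by (simp add: real_sqrt_mult)
    also have "G = inner g ((S + p *\<^sub>R u) - (S + r *\<^sub>R e))"
      by (simp add: G_def inner_diff_right g_e g_u)
    finally show ?thesis .
  qed
  ultimately show ?thesis
    by (rule amortized_step_by_witness)
qed

text \<open>The quantity x of Drift when |S P| = r and c is the cosine of the angle at S, so that
  s = r c and h = r sqrt (1 - c^2); Drift moves to S + (r c - x) u.\<close>

definition drift_shift :: "real \<Rightarrow> real \<Rightarrow> real" where
  "drift_shift r c = r * (sqrt (1 - c\<^sup>2) + c - 1) / sqrt 2"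

lemma sqrt_one_minus_square_bounds:
  fixes c :: real
  assumes "0 \<le> c" "c < 1"
  shows "(sqrt (1 - c\<^sup>2))\<^sup>2 = 1 - c\<^sup>2" "0 < sqrt (1 - c\<^sup>2)" "sqrt (1 - c\<^sup>2) \<le> 1"
    "1 - c \<le> sqrt (1 - c\<^sup>2)"
proof -
  have "c\<^sup>2 < 1"
    using assms by (simp add: abs_square_less_1)
  then show "(sqrt (1 - c\<^sup>2))\<^sup>2 = 1 - c\<^sup>2" "0 < sqrt (1 - c\<^sup>2)" "sqrt (1 - c\<^sup>2) \<le> 1"
    by simp_all
  have "(1 - c)\<^sup>2 \<le> 1 - c\<^sup>2"
    using assms by (simp add: power2_eq_square algebra_simps mult_left_le_one_le)
  then show "1 - c \<le> sqrt (1 - c\<^sup>2)"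
    using assms by (simp add: real_le_rsqrt)
qed

lemma drift_shift_bounds:
  assumes "0 \<le> c" "c < 1" "0 \<le> r"
  shows "0 \<le> drift_shift r c" "2 * drift_shift r c \<le> sqrt 2 * r * sqrt (1 - c\<^sup>2)"
    "drift_shift r c \<le> r * c"
proof -
  note z = sqrt_one_minus_square_bounds [OF assms(1,2)]
  have shift: "sqrt 2 * drift_shift r c = r * (sqrt (1 - c\<^sup>2) + c - 1)"
    by (simp add: drift_shift_def)
  show "0 \<le> drift_shift r c"
    using z(4) assms by (simp add: drift_shift_def)
  have "sqrt 2 * drift_shift r c \<le> r * sqrt (1 - c\<^sup>2)"
    unfolding shift using assms by (simp add: mult_left_mono)
  then have "sqrt 2 * (sqrt 2 * drift_shift r c) \<le> sqrt 2 * (r * sqrt (1 - c\<^sup>2))"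
    by (simp add: mult_left_mono)
  then show "2 * drift_shift r c \<le> sqrt 2 * r * sqrt (1 - c\<^sup>2)"
    by (simp add: mult.assoc [symmetric])
  have "sqrt (1 - c\<^sup>2) + c - 1 \<le> sqrt 2 * c"
  proof -
    have "c \<le> sqrt 2 * c"
      using assms(1) mult_right_mono [of 1 "sqrt 2" c] by simp
    with z(3) show ?thesis
      by linarith
  qed
  then have "sqrt 2 * drift_shift r c \<le> sqrt 2 * (r * c)"
    unfolding shift using assms(3) by (simp add: mult_left_mono mult.left_commute)
  then show "drift_shift r c \<le> r * c"
    by simp
qed

lemma drift_move_sq_le_small_angle:
  assumes c: "0 \<le> c" "c < 1" and r: "0 \<le> r"
  shows "(drift_shift r c)\<^sup>2 + r\<^sup>2 * (1 - c\<^sup>2)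
    \<le> 3 * (sqrt 2 * r * sqrt (1 - c\<^sup>2) - drift_shift r c)\<^sup>2"
proof -
  define z where "z = sqrt (1 - c\<^sup>2)"
  define x where "x = drift_shift r c"
  define y where "y = sqrt 2 * r * z"
  note z = sqrt_one_minus_square_bounds [OF c, folded z_def]
  note x = drift_shift_bounds [OF c r, folded z_def x_def, folded y_def]
  have "y\<^sup>2 = 2 * (r\<^sup>2 * z\<^sup>2)"
    by (simp add: y_def power_mult_distrib)
  then have "3 * (y - x)\<^sup>2 - (x\<^sup>2 + r\<^sup>2 * (1 - c\<^sup>2)) = (y - 2 * x) * (5 * y - 2 * x) / 2"
    unfolding z(1) [symmetric] by (simp add: power2_eq_square field_simps)
  moreover have "0 \<le> (y - 2 * x) * (5 * y - 2 * x)"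
    using x(1,2) by simp
  ultimately have "x\<^sup>2 + r\<^sup>2 * (1 - c\<^sup>2) \<le> 3 * (y - x)\<^sup>2"
    by simp
  then show ?thesis
    by (simp only: x_def y_def z_def)
qed

lemma drift_move_sq_le_sq:
  assumes c: "0 \<le> c" "c < 1" and r: "0 \<le> r"
  shows "(drift_shift r c)\<^sup>2 + r\<^sup>2 * (1 - c\<^sup>2) \<le> r\<^sup>2"
proof -
  have "(drift_shift r c)\<^sup>2 \<le> (r * c)\<^sup>2"
    using drift_shift_bounds [OF c r] by (simp add: power_mono)
  then show ?thesis
    by (simp add: power_mult_distrib algebra_simps)
qed

lemma drift_move_sq_le_behind:
  assumes c: "0 \<le> c" "c < 1" and r: "0 \<le> r"
  shows "(drift_shift r c)\<^sup>2 + r\<^sup>2 * (1 - c\<^sup>2) \<le> 3 * (r * (1 - c) + drift_shift r c)\<^sup>2"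
proof -
  define z where "z = sqrt (1 - c\<^sup>2)"
  define x where "x = drift_shift r c"
  define w where "w = 1 - c"
  note z = sqrt_one_minus_square_bounds [OF c, folded z_def]
  have shift: "sqrt 2 * x = r * (z - w)"
    by (simp add: x_def w_def drift_shift_def z_def)
  have "3 * (r * w + x)\<^sup>2 - (x\<^sup>2 + r\<^sup>2 * z\<^sup>2)
      = 3 * (r * w)\<^sup>2 + 3 * sqrt 2 * (r * w) * (sqrt 2 * x) + (sqrt 2 * x)\<^sup>2 - r\<^sup>2 * z\<^sup>2"
    by (simp add: power2_eq_square algebra_simps)
  also have "\<dots> = r\<^sup>2 * w * ((3 * sqrt 2 - 2) * z - (3 * sqrt 2 - 4) * w)"
    unfolding shift by (simp add: power2_eq_square algebra_simps)
  also have "\<dots> \<ge> 0"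
  proof -
    have "4 / 3 \<le> sqrt (2::real)"
      by (rule real_le_rsqrt) (simp add: power2_eq_square)
    then have "(3 * sqrt 2 - 4) * w \<le> (3 * sqrt 2 - 4) * z"
      using z(4) by (simp add: w_def mult_left_mono)
    moreover have "(3 * sqrt 2 - 4) * z \<le> (3 * sqrt 2 - 2) * z"
      using z(2) by simp
    ultimately show ?thesis
      using c(2) by (simp add: w_def)
  qed
  finally show ?thesis
    by (simp add: x_def w_def z(1))
qed

lemma crossing_witness_beyond_small_angle:
  assumes c: "0 \<le> c" "c < 1" and r: "0 \<le> r"
    and angle: "- 1 \<le> c - sqrt 2 * sqrt (1 - c\<^sup>2)"
    and p: "p = r * c - drift_shift r c" and beyond: "p \<le> b"
  shows "crossing_witness c r p b 1 (- sqrt 2)"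
proof -
  have "0 < sqrt 2 * sqrt (1 - c\<^sup>2)"
    using sqrt_one_minus_square_bounds [OF c] by simp
  then have "\<bar>c - sqrt 2 * sqrt (1 - c\<^sup>2)\<bar> \<le> 1"
    using angle c(2) by (simp add: abs_le_iff)
  moreover have "p * 1 - r * (1 * c + - sqrt 2 * sqrt (1 - c\<^sup>2))
      = sqrt 2 * r * sqrt (1 - c\<^sup>2) - drift_shift r c"
    by (simp add: p algebra_simps)
  moreover have "r * c - p = drift_shift r c"
    by (simp add: p)
  ultimately show ?thesis
    unfolding crossing_witness_def
    using beyond drift_shift_bounds [OF c r] drift_move_sq_le_small_angle [OF c r] by simp
qed

lemma crossing_witness_beyond_large_angle:
  assumes c: "0 \<le> c" "c < 1" and r: "0 \<le> r"
    and angle: "c - sqrt 2 * sqrt (1 - c\<^sup>2) < - 1"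
    and p: "p = r * c - drift_shift r c" and beyond: "p \<le> b"
  shows "crossing_witness c r p b (sqrt 2 * sqrt (1 - c\<^sup>2) - c) (- sqrt (1 - c\<^sup>2) - sqrt 2 * c)"
proof -
  define z where "z = sqrt (1 - c\<^sup>2)"
  define \<gamma> where "\<gamma> = sqrt 2 * z - c"
  define \<delta> where "\<delta> = - z - sqrt 2 * c"
  note z = sqrt_one_minus_square_bounds [OF c, folded z_def]
  have along_e: "\<gamma> * c + \<delta> * z = - 1"
    using z(1) by (simp add: \<gamma>_def \<delta>_def power2_eq_square algebra_simps)
  have norm_sq: "\<gamma>\<^sup>2 + \<delta>\<^sup>2 = 3"
    using z(1) by (simp add: \<gamma>_def \<delta>_def power2_diff power_mult_distrib algebra_simps)
  have steep: "1 < \<gamma>"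
    using angle by (simp add: \<gamma>_def z_def)
  have "0 \<le> p"
    using drift_shift_bounds [OF c r] by (simp add: p)
  then have gain: "r \<le> p * \<gamma> + r"
    using steep by simp
  have "(r * c - p)\<^sup>2 + r\<^sup>2 * (1 - c\<^sup>2) \<le> r\<^sup>2"
    using drift_move_sq_le_sq [OF c r] by (simp add: p)
  also have "\<dots> \<le> (p * \<gamma> + r)\<^sup>2"
    using gain r by (simp add: power_mono)
  also have "\<dots> \<le> 3 * (p * \<gamma> + r)\<^sup>2"
    by simp
  finally have "(r * c - p)\<^sup>2 + r\<^sup>2 * (1 - c\<^sup>2) \<le> 3 * (p * \<gamma> + r)\<^sup>2" .
  moreover have "\<bar>b - p\<bar> \<le> (b - p) * \<gamma>"
    using beyond steep by (simp add: mult_le_cancel_left1)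
  ultimately show ?thesis
    unfolding z_def [symmetric] crossing_witness_def
    unfolding \<gamma>_def [symmetric] \<delta>_def [symmetric] along_e norm_sq
    using gain r by simp
qed

lemma crossing_witness_behind:
  assumes c: "0 \<le> c" "c < 1" and r: "0 \<le> r"
    and p: "p = r * c - drift_shift r c" and behind: "b < p"
  shows "crossing_witness c r p b (- 1) (- sqrt (1 - c\<^sup>2) / (1 + c))"
proof -
  define z where "z = sqrt (1 - c\<^sup>2)"
  note z = sqrt_one_minus_square_bounds [OF c, folded z_def]
  have "1 + c \<noteq> 0"
    using c by simp
  then have along_e: "- 1 * c + - z / (1 + c) * z = - 1"
    using z(1) by (simp add: field_simps power2_eq_square)
  have "(z / (1 + c))\<^sup>2 \<le> 1"
    using z(2,3) c by (simp add: power_divide power_le_one)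
  then have norm_sq: "(- 1)\<^sup>2 + (- z / (1 + c))\<^sup>2 \<le> (3::real)"
    by simp
  have "p * - 1 - r * - 1 = r * (1 - c) + drift_shift r c"
    by (simp add: p algebra_simps)
  moreover have "r * c - p = drift_shift r c"
    by (simp add: p)
  ultimately show ?thesis
    unfolding z_def [symmetric] crossing_witness_def along_e
    using norm_sq behind c r drift_shift_bounds [OF c r] drift_move_sq_le_behind [OF c r]
    by simp
qed

lemma amortized_step_crossing:
  fixes e u S :: "'a::real_inner"
  assumes e: "norm e = 1" and u: "norm u = 1"
    and c: "0 \<le> inner e u" "inner e u < 1" and r: "0 \<le> r"
    and p: "p = r * inner e u - drift_shift r (inner e u)"
  shows "dist (S + r *\<^sub>R e) (S + p *\<^sub>R u) + sqrt 3 * dist (S + p *\<^sub>R u) (S + b *\<^sub>R u)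
    \<le> sqrt 3 * dist (S + r *\<^sub>R e) (S + a *\<^sub>R e) + 3 * dist (S + a *\<^sub>R e) (S + b *\<^sub>R u)"
proof -
  have "\<exists>\<gamma> \<delta>. crossing_witness (inner e u) r p b \<gamma> \<delta>"
  proof (cases "p \<le> b")
    case beyond: True
    show ?thesis
    proof (cases "- 1 \<le> inner e u - sqrt 2 * sqrt (1 - (inner e u)\<^sup>2)")
      case True
      from crossing_witness_beyond_small_angle [OF c r True p beyond] show ?thesis
        by blast
    next
      case False
      then have "inner e u - sqrt 2 * sqrt (1 - (inner e u)\<^sup>2) < - 1"
        by simp
      from crossing_witness_beyond_large_angle [OF c r this p beyond] show ?thesis
        by blast
    qed
  next
    case False
    then have "b < p"
      by simp
    from crossing_witness_behind [OF c r p this] show ?thesis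
      by blast
  qed
  then obtain \<gamma> \<delta> where "crossing_witness (inner e u) r p b \<gamma> \<delta>"
    by blast
  moreover have "\<bar>inner e u\<bar> < 1"
    using c by simp
  ultimately show ?thesis
    using amortized_step_at_crossing [OF e u] by blast
qed

section \<open>Lines in the plane\<close>

abbreviation line_through :: "'a::real_vector \<Rightarrow> 'a \<Rightarrow> 'a set" where
  "line_through a v \<equiv> {a + t *\<^sub>R v | t. True}"

lemma line_through_scaleR:
  fixes a v :: "'a::real_vector"
  assumes "k \<noteq> 0"
  shows "line_through a (k *\<^sub>R v) = line_through a v"
proof (intro set_eqI iffI)
  fix X
  assume "X \<in> line_through a (k *\<^sub>R v)"
  then obtain t where "X = a + (t * k) *\<^sub>R v"
    by auto
  then show "X \<in> line_through a v"
    by blast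
next
  fix X
  assume "X \<in> line_through a v"
  then obtain t where "X = a + (t / k) *\<^sub>R (k *\<^sub>R v)"
    using assms by auto
  then show "X \<in> line_through a (k *\<^sub>R v)"
    by blast
qed

lemma line_through_uminus:
  fixes a v :: "'a::real_vector"
  shows "line_through a (- v) = line_through a v"
  using line_through_scaleR [of "- 1" a v] by simp

lemma line_through_rebase:
  fixes a v S :: "'a::real_vector"
  assumes "S \<in> line_through a v"
  shows "line_through S v = line_through a v"
proof -
  obtain s where S: "S = a + s *\<^sub>R v"
    using assms by blast
  have "a + t *\<^sub>R v = S + (t - s) *\<^sub>R v" "S + t *\<^sub>R v = a + (s + t) *\<^sub>R v" for t
    by (simp_all add: S algebra_simps)
  then show ?thesis
    by blast
qed

lemma is_line_unit_direction:
  assumes "is_line L"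
  obtains a e where "norm e = 1" "L = line_through a e"
proof -
  obtain a v where "v \<noteq> 0" "L = line_through a v"
    using assms unfolding is_line_def by blast
  then have "norm (v /\<^sub>R norm v) = 1" "L = line_through a (v /\<^sub>R norm v)"
    using line_through_scaleR [of "inverse (norm v)" a v] by simp_all
  then show ?thesis
    using that by blast
qed

lemma proj_line_through:
  fixes S u X :: point
  assumes u: "norm u = 1"
  shows "proj (line_through S u) X = S + inner (X - S) u *\<^sub>R u"
proof -
  have uu: "inner u u = 1"
    using u by (simp add: dot_square_norm)
  define k where "k = inner (X - S) u"
  have orth: "inner (X - (S + k *\<^sub>R u)) u = 0"
    by (simp add: k_def inner_diff_left inner_add_left uu)
  have foot: "S + k *\<^sub>R u \<in> line_through S u \<and>
      (\<forall>Z \<in> line_through S u. inner (X - (S + k *\<^sub>R u)) (Z - (S + k *\<^sub>R u)) = 0)"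
  proof -
    have "S + t *\<^sub>R u - (S + k *\<^sub>R u) = (t - k) *\<^sub>R u" for t
      by (simp add: algebra_simps)
    then show ?thesis
      using orth by auto
  qed
  have unique: "Y = S + k *\<^sub>R u"
    if on_line: "Y \<in> line_through S u"
      and foot_Y: "\<forall>Z \<in> line_through S u. inner (X - Y) (Z - Y) = 0" for Y
  proof -
    obtain t where Y: "Y = S + t *\<^sub>R u"
      using on_line by blast
    have "Y + u \<in> line_through S u"
      by (rule CollectI, rule exI [of _ "t + 1"]) (simp add: Y algebra_simps)
    then have "inner (X - Y) ((Y + u) - Y) = 0"
      using foot_Y by blast
    then have "inner (X - Y) u = 0"
      by simp
    then have "t = k"
      by (simp add: Y k_def inner_diff_left inner_add_left uu)
    then show ?thesis
      by (simp add: Y)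
  qed
  show ?thesis
    unfolding proj_def k_def [symmetric] using foot unique by (rule the_equality) blast+
qed

lemma unit_parallel:
  fixes e u :: "'a::real_inner"
  assumes "norm e = 1" "norm u = 1" "\<bar>inner e u\<bar> = 1"
  shows "e = inner e u *\<^sub>R u"
proof -
  have "u = e \<or> u = - e"
    using assms norm_cauchy_schwarz_abs_eq [of e u] by simp
  then show ?thesis
    using assms(1) by (auto simp: dot_square_norm)
qed

lemma abs_inner_eq_1_if_collinear:
  fixes e u :: "'a::real_inner"
  assumes "norm e = 1" "norm u = 1" "k *\<^sub>R e = l *\<^sub>R u" "k \<noteq> 0"
  shows "\<bar>inner e u\<bar> = 1"
proof -
  define q where "q = l / k"
  have "e = inverse k *\<^sub>R (k *\<^sub>R e)"
    using assms(4) by simp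
  also have "\<dots> = q *\<^sub>R u"
    unfolding assms(3) q_def by (simp add: divide_inverse mult.commute)
  finally have e_q: "e = q *\<^sub>R u" .
  then have "inner e u = q"
    using assms(2) by (simp add: dot_square_norm)
  moreover have "\<bar>q\<bar> = 1"
    using e_q assms(1,2) by simp
  ultimately show ?thesis
    by simp
qed

lemma lines_meet_if_not_parallel:
  fixes a b e u :: point
  assumes e: "norm e = 1" and u: "norm u = 1" and not_parallel: "\<bar>inner e u\<bar> \<noteq> 1"
  obtains t s where "a + t *\<^sub>R e = b + s *\<^sub>R u"
proof -
  \<comment> \<open>Lagrange's identity makes the determinant D nonzero; t and s then come from Cramer's rule.\<close>
  define D where "D = e$1 * u$2 - e$2 * u$1"
  have "(inner e u)\<^sup>2 + D\<^sup>2 = ((e$1)\<^sup>2 + (e$2)\<^sup>2) * ((u$1)\<^sup>2 + (u$2)\<^sup>2)"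
    by (simp add: D_def inner_vec_def sum_2 power2_eq_square algebra_simps)
  also have "\<dots> = 1"
    using e u by (simp add: norm_vec_def L2_set_def sum_2)
  finally have "D \<noteq> 0"
    using not_parallel abs_square_eq_1 [of "inner e u"] by auto
  define d where "d = b - a"
  define t where "t = (d$1 * u$2 - d$2 * u$1) / D"
  define s where "s = (d$1 * e$2 - d$2 * e$1) / D"
  have "t * e$i - s * u$i = d$i" if "i = 1 \<or> i = 2" for i
  proof -
    have "t * e$i - s * u$i = ((d$1 * u$2 - d$2 * u$1) * e$i - (d$1 * e$2 - d$2 * e$1) * u$i) / D"
      using \<open>D \<noteq> 0\<close> by (simp add: t_def s_def field_simps)
    also have "\<dots> = d$i * D / D"
      using that by (auto simp: D_def algebra_simps)
    finally show ?thesis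
      using \<open>D \<noteq> 0\<close> by simp
  qed
  then have "t *\<^sub>R e - s *\<^sub>R u = d"
    unfolding vec_eq_iff forall_2 by simp
  then have "a + t *\<^sub>R e = b + s *\<^sub>R u"
    by (simp add: d_def algebra_simps)
  then show ?thesis
    by (rule that)
qed

lemma line_through_Int_singleton:
  fixes a b e u :: point
  assumes e: "norm e = 1" and u: "norm u = 1" and not_parallel: "\<bar>inner e u\<bar> \<noteq> 1"
  shows "\<exists>S. line_through a e \<inter> line_through b u = {S}"
proof -
  obtain t s where crossing: "a + t *\<^sub>R e = b + s *\<^sub>R u"
    using lines_meet_if_not_parallel [OF e u not_parallel] .
  have "X = a + t *\<^sub>R e" if X_in: "X \<in> line_through a e" "X \<in> line_through b u" for X
  proof -
    obtain t' s' where X: "X = a + t' *\<^sub>R e" "X = b + s' *\<^sub>R u"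
      using X_in by blast
    have "(t' - t) *\<^sub>R e = (a + t' *\<^sub>R e) - (a + t *\<^sub>R e)"
      by (simp add: algebra_simps)
    also have "\<dots> = (b + s' *\<^sub>R u) - (b + s *\<^sub>R u)"
      using X crossing by simp
    also have "\<dots> = (s' - s) *\<^sub>R u"
      by (simp add: algebra_simps)
    finally have "t' = t"
      using abs_inner_eq_1_if_collinear [OF e u] not_parallel by (metis eq_iff_diff_eq_0)
    then show ?thesis
      using X by simp
  qed
  then show ?thesis
    using crossing by blast
qed

lemma line_through_Int_singleton_not_parallel:
  fixes S e u :: "'a::real_inner"
  assumes e: "norm e = 1" and u: "norm u = 1"
    and crossing: "line_through S e \<inter> line_through S u = {S}"
  shows "\<bar>inner e u\<bar> \<noteq> 1"
proof
  assume "\<bar>inner e u\<bar> = 1"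
  then have "S + e = S + inner e u *\<^sub>R u"
    using unit_parallel [OF e u] by simp
  then have "S + e \<in> line_through S u"
    by blast
  moreover have "S + e \<in> line_through S e"
    by (rule CollectI, rule exI [of _ 1]) simp
  ultimately have "S + e = S"
    using crossing by blast
  then show False
    using e by simp
qed

lemma crossing_frame:
  fixes S P :: point
  assumes L: "is_line L" and L': "is_line L'" and crossing: "L \<inter> L' = {S}" and P: "P \<in> L"
  obtains e u r where "norm e = 1" "norm u = 1" "L = line_through S e" "L' = line_through S u"
    "P = S + r *\<^sub>R e" "0 \<le> r" "0 \<le> inner e u" "inner e u < 1"
proof -
  obtain a e0 where e0: "norm e0 = 1" and Le0: "L = line_through a e0"
    using is_line_unit_direction [OF L] .
  obtain a' u0 where u0: "norm u0 = 1" and Lu0: "L' = line_through a' u0"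
    using is_line_unit_direction [OF L'] .
  have "S \<in> L" "S \<in> L'"
    using crossing by auto
  then have Le0: "L = line_through S e0" and Lu0: "L' = line_through S u0"
    using line_through_rebase [of S a e0] line_through_rebase [of S a' u0] Le0 Lu0 by simp_all
  obtain \<rho> where \<rho>: "P = S + \<rho> *\<^sub>R e0"
    using P Le0 by blast
  define e where "e = (if 0 \<le> \<rho> then e0 else - e0)"
  define u where "u = (if 0 \<le> inner e u0 then u0 else - u0)"
  have "\<bar>inner e0 u0\<bar> \<le> 1"
    using Cauchy_Schwarz_ineq2 [of e0 u0] e0 u0 by simp
  moreover have "\<bar>inner e0 u0\<bar> \<noteq> 1"
    using line_through_Int_singleton_not_parallel [OF e0 u0] crossing Le0 Lu0 by simp
  moreover have "inner e u = \<bar>inner e0 u0\<bar>"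
    by (auto simp: e_def u_def)
  moreover have "L = line_through S e"
    unfolding Le0 e_def using line_through_uminus [of S e0] by (cases "0 \<le> \<rho>") simp_all
  moreover have "L' = line_through S u"
    unfolding Lu0 u_def using line_through_uminus [of S u0] by (cases "0 \<le> inner e u0") simp_all
  moreover have "P = S + \<bar>\<rho>\<bar> *\<^sub>R e"
    by (simp add: \<rho> e_def)
  moreover have "norm e = 1" "norm u = 1"
    using e0 u0 by (simp_all add: e_def u_def)
  ultimately show ?thesis
    using that [of e u "\<bar>\<rho>\<bar>"] by simp
qed

lemma line_through_eq_if_not_crossing:
  fixes a a' e u :: point
  assumes e: "norm e = 1" and u: "norm u = 1"
    and parallel: "\<nexists>S. line_through a e \<inter> line_through a' u = {S}"
  shows "line_through a e = line_through a u"
proof -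
  have parallel_dirs: "\<bar>inner e u\<bar> = 1"
    using line_through_Int_singleton [OF e u] parallel by blast
  from unit_parallel [OF e u this]
  have "line_through a e = line_through a (inner e u *\<^sub>R u)"
    by (rule arg_cong)
  also have "\<dots> = line_through a u"
    using parallel_dirs by (intro line_through_scaleR) auto
  finally show ?thesis .
qed

lemma proj_line_through_from_crossing:
  fixes S e u :: point
  assumes e: "norm e = 1" and u: "norm u = 1" and r: "0 \<le> r"
    and c: "0 \<le> inner e u" "inner e u \<le> 1"
  defines "Pb \<equiv> proj (line_through S u) (S + r *\<^sub>R e)"
  shows "Pb = S + (r * inner e u) *\<^sub>R u" "dist S Pb = r * inner e u"
    "dist (S + r *\<^sub>R e) Pb = r * sqrt (1 - (inner e u)\<^sup>2)"
proof -
  have ee: "inner e e = 1" and uu: "inner u u = 1"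
    using e u by (simp_all add: dot_square_norm)
  show Pb: "Pb = S + (r * inner e u) *\<^sub>R u"
    unfolding Pb_def proj_line_through [OF u] by simp
  show "dist S Pb = r * inner e u"
    using u r c by (simp add: Pb dist_norm)
  have "inner (S + r *\<^sub>R e - Pb) (S + r *\<^sub>R e - Pb) = r\<^sup>2 * (1 - (inner e u)\<^sup>2)"
    by (simp add: Pb inner_diff_left inner_diff_right ee uu inner_commute [of u e]
        power2_eq_square algebra_simps)
  then show "dist (S + r *\<^sub>R e) Pb = r * sqrt (1 - (inner e u)\<^sup>2)"
    using r by (simp add: dist_norm norm_eq_sqrt_inner real_sqrt_mult)
qed

section \<open>The Drift step and the competitive ratio\<close>

lemma drift_step_parallel:
  assumes L: "is_line L" and L': "is_line L'" and parallel: "\<nexists>S. L \<inter> L' = {S}"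
    and P: "P \<in> L" and A: "A \<in> L" and A': "A' \<in> L'"
  shows "drift_step L L' P \<in> L' \<and>
    dist P (drift_step L L' P) + sqrt 3 * dist (drift_step L L' P) A'
      \<le> sqrt 3 * dist P A + 3 * dist A A'"
proof -
  obtain a e where e: "norm e = 1" and Le: "L = line_through a e"
    using is_line_unit_direction [OF L] .
  obtain a' u where u: "norm u = 1" and Lu: "L' = line_through a' u"
    using is_line_unit_direction [OF L'] .
  have "L = line_through a u"
    using line_through_eq_if_not_crossing [OF e u] parallel Le Lu by simp
  then obtain tP tA where tP: "P = a + tP *\<^sub>R u" and tA: "A = a + tA *\<^sub>R u"
    using P A by blast
  obtain tA' where tA': "A' = a' + tA' *\<^sub>R u"
    using A' Lu by blast
  define P' where "P' = a' + inner (P - a') u *\<^sub>R u"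
  have "drift_step L L' P = proj L' P"
    using parallel by (simp add: drift_step_def)
  also have "\<dots> = P'"
    unfolding Lu P'_def by (rule proj_line_through [OF u])
  finally have step: "drift_step L L' P = P'" .
  have "P' \<in> L'"
    by (auto simp: Lu P'_def)
  moreover have "dist P P' + sqrt 3 * dist P' A' \<le> sqrt 3 * dist P A + 3 * dist A A'"
  proof (rule amortized_step_parallel [OF u])
    show "A - P = (tA - tP) *\<^sub>R u"
      by (simp add: tA tP algebra_simps)
    show "A' - P' = (tA' - inner (P - a') u) *\<^sub>R u"
      by (simp add: tA' P'_def algebra_simps)
    show "inner (P' - P) u = 0"
      using u by (simp add: P'_def inner_diff_left inner_add_left dot_square_norm)
  qed
  ultimately show ?thesis
    by (simp add: step)
qed

lemma drift_step_crossing_eq: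
  fixes S e u :: point
  assumes crossing: "L \<inter> L' = {S}" and L': "L' = line_through S u"
    and e: "norm e = 1" and u: "norm u = 1" and r: "0 \<le> r"
    and c: "0 \<le> inner e u" "inner e u \<le> 1"
  shows "drift_step L L' (S + r *\<^sub>R e) = S + (r * inner e u - drift_shift r (inner e u)) *\<^sub>R u"
proof -
  define c where "c = inner e u"
  define P where "P = S + r *\<^sub>R e"
  define Pb where "Pb = proj L' P"
  note Pb = proj_line_through_from_crossing [OF e u r c, of S, folded L' P_def Pb_def c_def]
  have the_S: "(THE S. L \<inter> L' = {S}) = S"
    using crossing by auto
  have "drift_step L L' P = S + (r * c - drift_shift r c) *\<^sub>R u"
  proof (cases "r * c = 0")
    case True
    then have "drift_shift r c = 0"
      by (auto simp: drift_shift_def)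
    with True show ?thesis
      using crossing by (simp add: drift_step_def Let_def the_S Pb_def [symmetric] Pb(1))
  next
    case False
    then have "Pb \<noteq> S"
      using u by (auto simp: Pb(1))
    then have "drift_step L L' P
        = S + ((dist S Pb - (dist P Pb + dist S Pb - dist S P) / sqrt 2) / dist S Pb) *\<^sub>R (Pb - S)"
      using crossing by (simp add: drift_step_def Let_def the_S Pb_def [symmetric])
    also have "\<dots> = S + (r * c - drift_shift r c) *\<^sub>R u"
      unfolding Pb(2,3) using False e r
      by (simp add: Pb(1) P_def dist_norm drift_shift_def field_simps)
    finally show ?thesis .
  qed
  then show ?thesis
    by (simp add: P_def c_def)
qed

lemma drift_step_crossing:
  assumes L: "is_line L" and L': "is_line L'" and crossing: "L \<inter> L' = {S}"
    and P: "P \<in> L" and A: "A \<in> L" and A': "A' \<in> L'"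
  shows "drift_step L L' P \<in> L' \<and>
    dist P (drift_step L L' P) + sqrt 3 * dist (drift_step L L' P) A'
      \<le> sqrt 3 * dist P A + 3 * dist A A'"
proof -
  obtain e u r where e: "norm e = 1" and u: "norm u = 1"
    and Le: "L = line_through S e" and Lu: "L' = line_through S u"
    and Pr: "P = S + r *\<^sub>R e" and r: "0 \<le> r" and c: "0 \<le> inner e u" "inner e u < 1"
    using crossing_frame [OF L L' crossing P] .
  obtain a b where a: "A = S + a *\<^sub>R e" and b: "A' = S + b *\<^sub>R u"
    using A A' Le Lu by blast
  define p where "p = r * inner e u - drift_shift r (inner e u)"
  have step: "drift_step L L' P = S + p *\<^sub>R u"
    unfolding Pr p_def using crossing Lu e u r c by (intro drift_step_crossing_eq) simp_all
  have "S + p *\<^sub>R u \<in> L'"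
    using Lu by blast
  then show ?thesis
    unfolding step unfolding Pr a b using amortized_step_crossing [OF e u c r p_def] by blast
qed

lemma drift_step_amortized:
  assumes "is_line L" "is_line L'" "P \<in> L" "A \<in> L" "A' \<in> L'"
  shows "drift_step L L' P \<in> L' \<and>
    dist P (drift_step L L' P) + sqrt 3 * dist (drift_step L L' P) A'
      \<le> sqrt 3 * dist P A + 3 * dist A A'"
  using assms drift_step_parallel drift_step_crossing by blast

lemma path_cost_Suc: "path_cost A (Suc t) = path_cost A t + dist (A t) (A (Suc t))"
  by (simp add: path_cost_def)

lemma drift_pos_amortized:
  assumes L0: "is_line L0" "P0 \<in> L0" and X: "\<forall>t\<in>{1..m}. is_line (X t)"
    and A: "A 0 = P0" "\<forall>t\<in>{1..m}. A t \<in> X t" and t: "t \<le> m"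
  shows "drift_pos L0 P0 X t \<in> (if t = 0 then L0 else X t) \<and>
    path_cost (drift_pos L0 P0 X) t + sqrt 3 * dist (drift_pos L0 P0 X t) (A t)
      \<le> 3 * path_cost A t"
  using t
proof (induction t)
  case 0
  then show ?case
    using L0 A by (simp add: path_cost_def)
next
  case (Suc t)
  let ?L = "if t = 0 then L0 else X t" and ?D = "drift_pos L0 P0 X"
  have IH: "?D t \<in> ?L" "path_cost ?D t + sqrt 3 * dist (?D t) (A t) \<le> 3 * path_cost A t"
    using Suc by simp_all
  have "drift_step ?L (X (Suc t)) (?D t) \<in> X (Suc t) \<and>
      dist (?D t) (drift_step ?L (X (Suc t)) (?D t))
        + sqrt 3 * dist (drift_step ?L (X (Suc t)) (?D t)) (A (Suc t))
      \<le> sqrt 3 * dist (?D t) (A t) + 3 * dist (A t) (A (Suc t))"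
    using Suc.prems L0 X A IH(1) by (intro drift_step_amortized) auto
  then show ?case
    using IH(2) by (simp add: path_cost_Suc)
qed

lemma feasible_path_exists:
  fixes X :: "nat \<Rightarrow> point set"
  assumes "\<forall>t\<in>{1..m}. is_line (X t)"
  shows "\<exists>A. A 0 = P0 \<and> (\<forall>t\<in>{1..m}. A t \<in> X t)"
proof -
  have "X t \<noteq> {}" if "t \<in> {1..m}" for t
    using assms that unfolding is_line_def by blast
  then have "\<forall>t\<in>{1..m}. (SOME y. y \<in> X t) \<in> X t"
    by (simp add: some_in_eq)
  then show ?thesis
    by (intro exI [of _ "\<lambda>t. if t = 0 then P0 else SOME y. y \<in> X t"]) auto
qed

lemma path_cost_drift_pos_le:
  assumes "is_line L0" "P0 \<in> L0" "\<forall>t\<in>{1..m}. is_line (X t)"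
    and "A 0 = P0" "\<forall>t\<in>{1..m}. A t \<in> X t"
  shows "path_cost (drift_pos L0 P0 X) m \<le> 3 * path_cost A m"
proof -
  have "path_cost (drift_pos L0 P0 X) m + sqrt 3 * dist (drift_pos L0 P0 X m) (A m)
      \<le> 3 * path_cost A m"
    using drift_pos_amortized [OF assms order_refl] by simp
  moreover have "0 \<le> sqrt 3 * dist (drift_pos L0 P0 X m) (A m)"
    by simp
  ultimately show ?thesis
    by linarith
qed

theorem mainTheorem1:
  fixes P0 :: point and L0 :: "point set" and X :: "nat \<Rightarrow> point set" and m :: nat
  assumes "is_line L0" and "P0 \<in> L0"
    and "\<forall>t\<in>{1..m}. is_line (X t)"
  shows "path_cost (drift_pos L0 P0 X) m \<le> 3 * OPT P0 X m"
proof -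
  have "path_cost (drift_pos L0 P0 X) m / 3 \<le> path_cost A m"
    if "A 0 = P0" "\<forall>t\<in>{1..m}. A t \<in> X t" for A
    using path_cost_drift_pos_le [OF assms that] by simp
  then have "path_cost (drift_pos L0 P0 X) m / 3 \<le> OPT P0 X m"
    unfolding OPT_def using feasible_path_exists [OF assms(3)] by (intro cInf_greatest) auto
  then show ?thesis
    by simp
qed

end
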